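(* Let $B_3=\langle\sigma_1,\sigma_2\mid\sigma_1\sigma_2\sigma_1=\sigma_2\sigma_1\sigma_2\rangle$, $\Delta=\sigma_1\sigma_2\sigma_1$, and let $<_{DD}$ be the Dubrovina–Dubrovin ordering. Then for every braid $\beta\in B_3$ and every integer $k$, \[\Delta^{-2}<_{DD}\beta^{-1}\sigma_2^k\beta<_{DD}\Delta^2.\]
   Context: A word in $\sigma_1^{\pm1},\sigma_2^{\pm1}$ is 1-positive if $\sigma_1$ occurs in it and only with positive exponents. The Dubrovina–Dubrovin left-ordering $<_{DD}$ of $B_3$ has positive cone consisting of those $\beta\in B_3$ that admit a 1-positive representative word, together with the elements $\sigma_2^k$ for $k<0$. *)

theory Defs
  imports Main
begin

datatype gen = S1 | S2

text \<open>A letter (g, True) is g, a letter (g, False) is g^(-1).\<close>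
type_synonym bword = "(gen \<times> bool) list"

definition inv_word :: "bword \<Rightarrow> bword" where
  "inv_word w = rev (map (\<lambda>(g, e). (g, \<not> e)) w)"

inductive braid_step :: "bword \<Rightarrow> bword \<Rightarrow> bool" where
  cancel: "braid_step (u @ [(g, e), (g, \<not> e)] @ v) (u @ v)"
| braid_rel: "braid_step (u @ [(S1, True), (S2, True), (S1, True)] @ v)
                         (u @ [(S2, True), (S1, True), (S2, True)] @ v)"

definition braid_eq :: "bword \<Rightarrow> bword \<Rightarrow> bool" where
  "braid_eq = equivclp braid_step"

definition one_positive :: "bword \<Rightarrow> bool" where
  "one_positive w \<longleftrightarrow> (S1, True) \<in> set w \<and> (S1, False) \<notin> set w"

definition sigma2_pow :: "int \<Rightarrow> bword" where
  "sigma2_pow k = (if k \<ge> 0 then replicate (nat k) (S2, True)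
                   else replicate (nat (- k)) (S2, False))"

definition DD_pos :: "bword \<Rightarrow> bool" where
  "DD_pos w \<longleftrightarrow> (\<exists>v. braid_eq w v \<and> one_positive v) \<or>
               (\<exists>k::int. k < 0 \<and> braid_eq w (sigma2_pow k))"

definition DD_less :: "bword \<Rightarrow> bword \<Rightarrow> bool" where
  "DD_less a b \<longleftrightarrow> DD_pos (inv_word a @ b)"

definition Delta :: bword where
  "Delta = [(S1, True), (S2, True), (S1, True)]"

end

theory Submission
  imports Defs
begin

text \<open>Conjugation by \<open>\<Delta>\<close> exchanges \<open>\<sigma>\<^sub>1\<close> and \<open>\<sigma>\<^sub>2\<close>. By induction on \<open>\<beta>\<close>, a conjugate
  \<open>\<beta>\<^sup>-\<^sup>1 P \<beta>\<close> of a power \<open>P\<close> of one generator equals \<open>v\<^sup>-\<^sup>1 Q v\<close> with \<open>Q\<close> again a power of one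
  generator and \<open>v\<close> using only the letters \<open>\<sigma>\<^sub>1, \<sigma>\<^sub>2\<^sup>-\<^sup>1\<close> or only \<open>\<sigma>\<^sub>1\<^sup>-\<^sup>1, \<sigma>\<^sub>2\<close>: when a new last
  letter breaks this pattern, either it cancels, or the last two letters are \<open>\<Delta>\<^sup>\<plusminus>\<^sup>1\<close> times a
  single letter, and that \<open>\<Delta>\<^sup>\<plusminus>\<^sup>1\<close> moves to the front and is absorbed by the conjugation.
  As \<open>\<Delta>\<^sup>2\<close> is central and \<open>\<Delta> X = flip(X) \<Delta>\<close>, the word \<open>\<Delta>\<^sup>2 v\<^sup>-\<^sup>1 Q v\<close> can then be written as
  \<open>X\<^sub>0 \<Delta> flip(X\<^sub>1) \<Delta> X\<^sub>2\<close> with no \<open>\<sigma>\<^sub>1\<^sup>-\<^sup>1\<close> left, which is 1-positive. This gives the lower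
  bound; the upper bound is the lower bound for \<open>-k\<close>, again because \<open>\<Delta>\<^sup>2\<close> is central.\<close>

abbreviation \<sigma>\<^sub>1 :: "gen \<times> bool" where "\<sigma>\<^sub>1 \<equiv> (S1, True)"
abbreviation \<sigma>\<^sub>1' :: "gen \<times> bool" where "\<sigma>\<^sub>1' \<equiv> (S1, False)"
abbreviation \<sigma>\<^sub>2 :: "gen \<times> bool" where "\<sigma>\<^sub>2 \<equiv> (S2, True)"
abbreviation \<sigma>\<^sub>2' :: "gen \<times> bool" where "\<sigma>\<^sub>2' \<equiv> (S2, False)"

lemma braid_eq_refl [simp]: "braid_eq w w"
  unfolding braid_eq_def by simp

lemma braid_eq_sym: "braid_eq u v \<Longrightarrow> braid_eq v u"
  unfolding braid_eq_def by (rule equivclp_sym)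

lemma braid_eq_trans [trans]: "braid_eq u v \<Longrightarrow> braid_eq v w \<Longrightarrow> braid_eq u w"
  unfolding braid_eq_def by (rule equivclp_trans)

lemma braid_eq_step: "braid_step u v \<Longrightarrow> braid_eq u v"
  unfolding braid_eq_def by (rule r_into_equivclp)

lemma braid_step_context: "braid_step u v \<Longrightarrow> braid_step (x @ u @ y) (x @ v @ y)"
proof (induction rule: braid_step.induct)
  case (cancel u g e v)
  show ?case using braid_step.cancel[of "x @ u" g e "v @ y"] by simp
next
  case (braid_rel u v)
  show ?case using braid_step.braid_rel[of "x @ u" "v @ y"] by simp
qed

lemma braid_eq_context: "braid_eq u v \<Longrightarrow> braid_eq (x @ u @ y) (x @ v @ y)"
  unfolding braid_eq_def
proof (induction rule: equivclp_induct)
  case (step v w)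
  then show ?case
    by (meson braid_step_context equivclp_into_equivclp)
qed simp

lemma braid_eq_append: "braid_eq u u' \<Longrightarrow> braid_eq v v' \<Longrightarrow> braid_eq (u @ v) (u' @ v')"
  using braid_eq_context[of u u' "[]" v] braid_eq_context[of v v' u' "[]"]
  by (auto intro: braid_eq_trans)

lemma braid_eq_cancel: "braid_eq (x @ [(g, e), (g, \<not> e)] @ y) (x @ y)"
  by (rule braid_eq_step[OF braid_step.cancel])

lemma braid_eq_braid_rel: "braid_eq [\<sigma>\<^sub>1, \<sigma>\<^sub>2, \<sigma>\<^sub>1] [\<sigma>\<^sub>2, \<sigma>\<^sub>1, \<sigma>\<^sub>2]"
  using braid_eq_step[OF braid_step.braid_rel[of "[]" "[]"]] by simp

lemma inv_word_simps [simp]: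
  "inv_word [] = []"
  "inv_word (u @ v) = inv_word v @ inv_word u"
  "inv_word ((g, e) # w) = inv_word w @ [(g, \<not> e)]"
  "inv_word (inv_word w) = w"
  by (auto simp: inv_word_def rev_map comp_def case_prod_beta)

lemma mem_set_inv_word: "(g, e) \<in> set (inv_word w) \<longleftrightarrow> (g, \<not> e) \<in> set w"
  by (force simp: inv_word_def)

lemma braid_eq_append_inv_word: "braid_eq (w @ inv_word w) []"
proof (induction w)
  case (Cons l w)
  obtain g e where l: "l = (g, e)" by fastforce
  have "braid_eq ([l] @ (w @ inv_word w) @ [(g, \<not> e)]) ([l] @ [] @ [(g, \<not> e)])"
    by (rule braid_eq_context[OF Cons.IH])
  also have "braid_eq \<dots> []"
    using braid_eq_cancel[of "[]" g e "[]"] l by simp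
  finally show ?case using l by simp
qed simp

lemma braid_eq_inv_word_append: "braid_eq (inv_word w @ w) []"
  using braid_eq_append_inv_word[of "inv_word w"] by simp

lemma braid_eq_inv_word: "braid_eq u v \<Longrightarrow> braid_eq (inv_word u) (inv_word v)"
proof -
  assume "braid_eq u v"
  have "braid_eq (inv_word u) (inv_word u @ (v @ inv_word v) @ [])"
    using braid_eq_sym[OF braid_eq_context[OF braid_eq_append_inv_word[of v], of "inv_word u" "[]"]]
    by simp
  also have "braid_eq \<dots> (inv_word u @ (u @ inv_word v) @ [])"
    using braid_eq_context[OF braid_eq_append[OF braid_eq_sym[OF \<open>braid_eq u v\<close>] braid_eq_refl]] .
  also have "braid_eq \<dots> ([] @ inv_word v)"
    using braid_eq_context[OF braid_eq_inv_word_append[of u], of "[]" "inv_word v"] by simp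
  finally show ?thesis by simp
qed

lemma braid_eq_conj: "braid_eq z z' \<Longrightarrow> braid_eq (inv_word z @ P @ z) (inv_word z' @ P @ z')"
  by (simp add: braid_eq_append braid_eq_inv_word)

lemma braid_eq_inv_commute:
  assumes "braid_eq (w @ D) (D @ w')"
  shows "braid_eq (inv_word D @ w) (w' @ inv_word D)"
proof -
  have "braid_eq (inv_word D @ w) (inv_word D @ (w @ D) @ inv_word D)"
    using braid_eq_sym[OF braid_eq_context[OF braid_eq_append_inv_word[of D], of "inv_word D @ w" "[]"]]
    by simp
  also have "braid_eq \<dots> ((inv_word D @ D) @ w' @ inv_word D)"
    using braid_eq_context[OF assms, of "inv_word D" "inv_word D"] by simp
  also have "braid_eq \<dots> ([] @ w' @ inv_word D)"
    using braid_eq_context[OF braid_eq_inv_word_append[of D], of "[]" "w' @ inv_word D"] by simp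
  finally show ?thesis by simp
qed

fun flip_gen :: "gen \<Rightarrow> gen" where
  "flip_gen S1 = S2"
| "flip_gen S2 = S1"

definition flip_word :: "bword \<Rightarrow> bword" where
  "flip_word = map (\<lambda>(g, e). (flip_gen g, e))"

lemma flip_gen_flip_gen [simp]: "flip_gen (flip_gen g) = g"
  by (cases g) auto

lemma flip_word_simps [simp]:
  "flip_word [] = []"
  "flip_word (u @ v) = flip_word u @ flip_word v"
  "flip_word ((g, e) # w) = (flip_gen g, e) # flip_word w"
  "flip_word (flip_word w) = w"
  by (auto simp: flip_word_def comp_def case_prod_beta)

lemma braid_eq_letter_Delta: "braid_eq ((g, e) # Delta) (Delta @ [(flip_gen g, e)])"
proof (cases g; cases e)
  assume "g = S1" "e"
  then show ?thesis
    using braid_eq_context[OF braid_eq_braid_rel, of "[\<sigma>\<^sub>1]" "[]"] by (simp add: Delta_def)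
next
  assume "g = S2" "e"
  then show ?thesis
    using braid_eq_context[OF braid_eq_sym[OF braid_eq_braid_rel], of "[]" "[\<sigma>\<^sub>1]"]
    by (simp add: Delta_def)
next
  assume "g = S1" "\<not> e"
  have "braid_eq ([\<sigma>\<^sub>1'] @ Delta) [\<sigma>\<^sub>2, \<sigma>\<^sub>1]"
    using braid_eq_cancel[of "[]" S1 False "[\<sigma>\<^sub>2, \<sigma>\<^sub>1]"] by (simp add: Delta_def)
  also have "braid_eq [\<sigma>\<^sub>2, \<sigma>\<^sub>1] ([\<sigma>\<^sub>2, \<sigma>\<^sub>1, \<sigma>\<^sub>2] @ [\<sigma>\<^sub>2'])"
    using braid_eq_sym[OF braid_eq_cancel[of "[\<sigma>\<^sub>2, \<sigma>\<^sub>1]" S2 True "[]"]] by simp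
  also have "braid_eq \<dots> (Delta @ [\<sigma>\<^sub>2'])"
    using braid_eq_context[OF braid_eq_sym[OF braid_eq_braid_rel], of "[]" "[\<sigma>\<^sub>2']"]
    by (simp add: Delta_def)
  finally show ?thesis using \<open>g = S1\<close> \<open>\<not> e\<close> by simp
next
  assume "g = S2" "\<not> e"
  have "braid_eq ([\<sigma>\<^sub>2'] @ Delta) ([\<sigma>\<^sub>2'] @ [\<sigma>\<^sub>2, \<sigma>\<^sub>1, \<sigma>\<^sub>2])"
    using braid_eq_context[OF braid_eq_braid_rel, of "[\<sigma>\<^sub>2']" "[]"] by (simp add: Delta_def)
  also have "braid_eq \<dots> [\<sigma>\<^sub>1, \<sigma>\<^sub>2]"
    using braid_eq_cancel[of "[]" S2 False "[\<sigma>\<^sub>1, \<sigma>\<^sub>2]"] by simp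
  also have "braid_eq \<dots> (Delta @ [\<sigma>\<^sub>1'])"
    using braid_eq_sym[OF braid_eq_cancel[of "[\<sigma>\<^sub>1, \<sigma>\<^sub>2]" S1 True "[]"]]
    by (simp add: Delta_def)
  finally show ?thesis using \<open>g = S2\<close> \<open>\<not> e\<close> by simp
qed

lemma braid_eq_word_Delta: "braid_eq (w @ Delta) (Delta @ flip_word w)"
proof (induction w)
  case (Cons l w)
  obtain g e where l: "l = (g, e)" by fastforce
  have "braid_eq ([l] @ w @ Delta) ([l] @ Delta @ flip_word w)"
    using braid_eq_context[OF Cons.IH, of "[l]" "[]"] by simp
  also have "braid_eq \<dots> (Delta @ [(flip_gen g, e)] @ flip_word w)"
    using braid_eq_context[OF braid_eq_letter_Delta[of g e], of "[]" "flip_word w"] l by simp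
  finally show ?case using l by simp
qed simp

lemma braid_eq_word_Delta_pm:
  assumes "D \<in> {Delta, inv_word Delta}"
  shows "braid_eq (w @ D) (D @ flip_word w)"
proof (cases "D = Delta")
  case False
  have "braid_eq (inv_word Delta @ flip_word w) (w @ inv_word Delta)"
    using braid_eq_inv_commute[OF braid_eq_word_Delta[of "flip_word w"]] by simp
  moreover have "D = inv_word Delta" using assms False by simp
  ultimately show ?thesis by (simp add: braid_eq_sym)
qed (simp add: braid_eq_word_Delta)

lemma braid_eq_Delta_squared_central: "braid_eq (Delta @ Delta @ w) (w @ Delta @ Delta)"
proof -
  have "braid_eq (Delta @ Delta @ w) (Delta @ flip_word w @ Delta)"
    using braid_eq_context[OF braid_eq_sym[OF braid_eq_word_Delta[of "flip_word w"]], of Delta "[]"]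
    by simp
  also have "braid_eq \<dots> (w @ Delta @ Delta)"
    using braid_eq_context[OF braid_eq_sym[OF braid_eq_word_Delta[of w]], of "[]" Delta] by simp
  finally show ?thesis .
qed

lemma braid_eq_conj_Delta_pm:
  assumes "D \<in> {Delta, inv_word Delta}"
  shows "braid_eq (inv_word (D @ y) @ P @ D @ y) (inv_word y @ flip_word P @ y)"
proof -
  have "braid_eq (inv_word D @ P @ D) ((flip_word P @ inv_word D) @ D)"
    using braid_eq_context[OF braid_eq_inv_commute[OF braid_eq_word_Delta_pm[OF assms, of P]], of "[]" D]
    by simp
  also have "braid_eq \<dots> (flip_word P @ [])"
    using braid_eq_context[OF braid_eq_inv_word_append[of D], of "flip_word P" "[]"] by simp
  finally show ?thesis
    using braid_eq_context[of "inv_word D @ P @ D" "flip_word P" "inv_word y" y] by simp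
qed

lemma braid_eq_pair_Delta_pm:
  "braid_eq [\<sigma>\<^sub>1, \<sigma>\<^sub>2] (Delta @ [\<sigma>\<^sub>1'])"
  "braid_eq [\<sigma>\<^sub>2, \<sigma>\<^sub>1] (Delta @ [\<sigma>\<^sub>2'])"
  "braid_eq [\<sigma>\<^sub>2', \<sigma>\<^sub>1'] (inv_word Delta @ [\<sigma>\<^sub>2])"
  "braid_eq [\<sigma>\<^sub>1', \<sigma>\<^sub>2'] (inv_word Delta @ [\<sigma>\<^sub>1])"
proof -
  show ab: "braid_eq [\<sigma>\<^sub>1, \<sigma>\<^sub>2] (Delta @ [\<sigma>\<^sub>1'])"
    using braid_eq_sym[OF braid_eq_cancel[of "[\<sigma>\<^sub>1, \<sigma>\<^sub>2]" S1 True "[]"]] by (simp add: Delta_def)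
  have "braid_eq [\<sigma>\<^sub>2, \<sigma>\<^sub>1] ([\<sigma>\<^sub>2, \<sigma>\<^sub>1, \<sigma>\<^sub>2] @ [\<sigma>\<^sub>2'])"
    using braid_eq_sym[OF braid_eq_cancel[of "[\<sigma>\<^sub>2, \<sigma>\<^sub>1]" S2 True "[]"]] by simp
  also have "braid_eq \<dots> (Delta @ [\<sigma>\<^sub>2'])"
    using braid_eq_context[OF braid_eq_sym[OF braid_eq_braid_rel], of "[]" "[\<sigma>\<^sub>2']"]
    by (simp add: Delta_def)
  finally show ba: "braid_eq [\<sigma>\<^sub>2, \<sigma>\<^sub>1] (Delta @ [\<sigma>\<^sub>2'])" .
  have inv_Delta: "inv_word Delta \<in> {Delta, inv_word Delta}" by simp
  have "braid_eq [\<sigma>\<^sub>2', \<sigma>\<^sub>1'] ([\<sigma>\<^sub>1] @ inv_word Delta)"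
    using braid_eq_inv_word[OF ab] by simp
  then show "braid_eq [\<sigma>\<^sub>2', \<sigma>\<^sub>1'] (inv_word Delta @ [\<sigma>\<^sub>2])"
    using braid_eq_word_Delta_pm[OF inv_Delta, of "[\<sigma>\<^sub>1]"] by (simp add: braid_eq_trans)
  have "braid_eq [\<sigma>\<^sub>1', \<sigma>\<^sub>2'] ([\<sigma>\<^sub>2] @ inv_word Delta)"
    using braid_eq_inv_word[OF ba] by simp
  then show "braid_eq [\<sigma>\<^sub>1', \<sigma>\<^sub>2'] (inv_word Delta @ [\<sigma>\<^sub>1])"
    using braid_eq_word_Delta_pm[OF inv_Delta, of "[\<sigma>\<^sub>2]"] by (simp add: braid_eq_trans)
qed

lemma letter_cases:
  obtains "l = \<sigma>\<^sub>1" | "l = \<sigma>\<^sub>1'" | "l = \<sigma>\<^sub>2" | "l = \<sigma>\<^sub>2'"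
  by (metis (full_types) gen.exhaust prod.exhaust)

definition pos_neg_word :: "bword \<Rightarrow> bool" where
  "pos_neg_word v \<longleftrightarrow> set v \<subseteq> {\<sigma>\<^sub>1, \<sigma>\<^sub>2'}"

definition neg_pos_word :: "bword \<Rightarrow> bool" where
  "neg_pos_word v \<longleftrightarrow> set v \<subseteq> {\<sigma>\<^sub>1', \<sigma>\<^sub>2}"

lemma pos_neg_word_flip_word: "pos_neg_word v \<Longrightarrow> neg_pos_word (flip_word v)"
  by (auto simp: pos_neg_word_def neg_pos_word_def flip_word_def)

lemma neg_pos_word_flip_word: "neg_pos_word v \<Longrightarrow> pos_neg_word (flip_word v)"
  by (auto simp: pos_neg_word_def neg_pos_word_def flip_word_def)

lemma braid_eq_snoc_pair_Delta_pm:
  assumes "braid_eq [t, l] (D @ [l'])" "D \<in> {Delta, inv_word Delta}"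
  shows "braid_eq (u @ [t, l]) (D @ flip_word u @ [l'])"
proof -
  have "braid_eq (u @ [t, l]) ((u @ D) @ [l'])"
    using braid_eq_context[OF assms(1), of u "[]"] by simp
  also have "braid_eq \<dots> ((D @ flip_word u) @ [l'])"
    using braid_eq_context[OF braid_eq_word_Delta_pm[OF assms(2), of u], of "[]" "[l']"] by simp
  finally show ?thesis by simp
qed

lemma pos_neg_word_snoc:
  assumes "pos_neg_word v"
  obtains D v' where "D \<in> {[], Delta, inv_word Delta}" "pos_neg_word v' \<or> neg_pos_word v'"
    and "braid_eq (v @ [l]) (D @ v')"
proof -
  consider "l \<in> {\<sigma>\<^sub>1, \<sigma>\<^sub>2'}" | "v = []" | u t where "v = u @ [t]" "l \<in> {\<sigma>\<^sub>1', \<sigma>\<^sub>2}"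
    by (metis rev_exhaust insert_iff letter_cases)
  then show ?thesis
  proof cases
    case 1
    then show ?thesis using assms that[of "[]" "v @ [l]"] by (simp add: pos_neg_word_def)
  next
    case 2
    then show ?thesis
      using that[of "[]" "[l]"] by (cases l rule: letter_cases) (simp_all add: pos_neg_word_def neg_pos_word_def)
  next
    case (3 u t)
    then have v: "v = u @ [t]" and "t \<in> {\<sigma>\<^sub>1, \<sigma>\<^sub>2'}" and flip_u: "neg_pos_word (flip_word u)"
      using assms pos_neg_word_flip_word by (auto simp: pos_neg_word_def)
    then consider "t = \<sigma>\<^sub>1" "l = \<sigma>\<^sub>1'" | "t = \<sigma>\<^sub>1" "l = \<sigma>\<^sub>2" | "t = \<sigma>\<^sub>2'" "l = \<sigma>\<^sub>1'" | "t = \<sigma>\<^sub>2'" "l = \<sigma>\<^sub>2"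
      using 3 by blast
    then show ?thesis
    proof cases
      case 1
      then show ?thesis using assms v that[of "[]" u] braid_eq_cancel[of u S1 True "[]"]
        by (simp add: pos_neg_word_def)
    next
      case 2
      have "neg_pos_word (flip_word u @ [\<sigma>\<^sub>1'])" using flip_u by (simp add: neg_pos_word_def)
      then show ?thesis using 2 v braid_eq_snoc_pair_Delta_pm[OF braid_eq_pair_Delta_pm(1), of u]
        by (intro that[of Delta "flip_word u @ [\<sigma>\<^sub>1']"]) auto
    next
      case 3
      have "neg_pos_word (flip_word u @ [\<sigma>\<^sub>2])" using flip_u by (simp add: neg_pos_word_def)
      then show ?thesis using 3 v braid_eq_snoc_pair_Delta_pm[OF braid_eq_pair_Delta_pm(3), of u]
        by (intro that[of "inv_word Delta" "flip_word u @ [\<sigma>\<^sub>2]"]) auto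
    next
      case 4
      then show ?thesis using assms v that[of "[]" u] braid_eq_cancel[of u S2 False "[]"]
        by (simp add: pos_neg_word_def)
    qed
  qed
qed

lemma neg_pos_word_snoc:
  assumes "neg_pos_word v"
  obtains D v' where "D \<in> {[], Delta, inv_word Delta}" "pos_neg_word v' \<or> neg_pos_word v'"
    and "braid_eq (v @ [l]) (D @ v')"
proof -
  consider "l \<in> {\<sigma>\<^sub>1', \<sigma>\<^sub>2}" | "v = []" | u t where "v = u @ [t]" "l \<in> {\<sigma>\<^sub>1, \<sigma>\<^sub>2'}"
    by (metis rev_exhaust insert_iff letter_cases)
  then show ?thesis
  proof cases
    case 1
    then show ?thesis using assms that[of "[]" "v @ [l]"] by (simp add: neg_pos_word_def)
  next
    case 2
    then show ?thesis
      using that[of "[]" "[l]"] by (cases l rule: letter_cases) (simp_all add: pos_neg_word_def neg_pos_word_def)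
  next
    case (3 u t)
    then have v: "v = u @ [t]" and "t \<in> {\<sigma>\<^sub>1', \<sigma>\<^sub>2}" and flip_u: "pos_neg_word (flip_word u)"
      using assms neg_pos_word_flip_word by (auto simp: neg_pos_word_def)
    then consider "t = \<sigma>\<^sub>1'" "l = \<sigma>\<^sub>1" | "t = \<sigma>\<^sub>1'" "l = \<sigma>\<^sub>2'" | "t = \<sigma>\<^sub>2" "l = \<sigma>\<^sub>1" | "t = \<sigma>\<^sub>2" "l = \<sigma>\<^sub>2'"
      using 3 by blast
    then show ?thesis
    proof cases
      case 1
      then show ?thesis using assms v that[of "[]" u] braid_eq_cancel[of u S1 False "[]"]
        by (simp add: neg_pos_word_def)
    next
      case 2
      have "pos_neg_word (flip_word u @ [\<sigma>\<^sub>1])" using flip_u by (simp add: pos_neg_word_def)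
      then show ?thesis using 2 v braid_eq_snoc_pair_Delta_pm[OF braid_eq_pair_Delta_pm(4), of u]
        by (intro that[of "inv_word Delta" "flip_word u @ [\<sigma>\<^sub>1]"]) auto
    next
      case 3
      have "pos_neg_word (flip_word u @ [\<sigma>\<^sub>2'])" using flip_u by (simp add: pos_neg_word_def)
      then show ?thesis using 3 v braid_eq_snoc_pair_Delta_pm[OF braid_eq_pair_Delta_pm(2), of u]
        by (intro that[of Delta "flip_word u @ [\<sigma>\<^sub>2']"]) auto
    next
      case 4
      then show ?thesis using assms v that[of "[]" u] braid_eq_cancel[of u S2 True "[]"]
        by (simp add: neg_pos_word_def)
    qed
  qed
qed

lemma conjugate_normal_form:
  "\<exists>v Q. (pos_neg_word v \<or> neg_pos_word v) \<and> (Q = P \<or> Q = flip_word P) \<and>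
     braid_eq (inv_word \<beta> @ P @ \<beta>) (inv_word v @ Q @ v)"
proof (induction \<beta> rule: rev_induct)
  case Nil
  show ?case by (intro exI[of _ "[]"] exI[of _ P]) (simp add: pos_neg_word_def)
next
  case (snoc l \<beta>)
  then obtain v Q where v: "pos_neg_word v \<or> neg_pos_word v" and Q: "Q = P \<or> Q = flip_word P"
    and conj: "braid_eq (inv_word \<beta> @ P @ \<beta>) (inv_word v @ Q @ v)"
    by blast
  obtain D v' where D: "D \<in> {[], Delta, inv_word Delta}" and v': "pos_neg_word v' \<or> neg_pos_word v'"
    and vl: "braid_eq (v @ [l]) (D @ v')"
    using v pos_neg_word_snoc neg_pos_word_snoc by metis
  obtain Q' where Q': "Q' = Q \<or> Q' = flip_word Q"
    and conj_D: "braid_eq (inv_word (D @ v') @ Q @ D @ v') (inv_word v' @ Q' @ v')"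
  proof (cases "D = []")
    case True
    then show ?thesis using that[of Q] by simp
  next
    case False
    then show ?thesis using that[of "flip_word Q"] D braid_eq_conj_Delta_pm[of D v' Q] by simp
  qed
  have "braid_eq (inv_word (\<beta> @ [l]) @ P @ \<beta> @ [l]) (inv_word [l] @ (inv_word v @ Q @ v) @ [l])"
    using braid_eq_context[OF conj, of "inv_word [l]" "[l]"] by simp
  also have "\<dots> = inv_word (v @ [l]) @ Q @ v @ [l]" by simp
  also have "braid_eq \<dots> (inv_word (D @ v') @ Q @ D @ v')"
    using braid_eq_conj[OF vl] by simp
  also note conj_D
  finally have "braid_eq (inv_word (\<beta> @ [l]) @ P @ \<beta> @ [l]) (inv_word v' @ Q' @ v')" .
  moreover have "Q' = P \<or> Q' = flip_word P" using Q Q' by auto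
  ultimately show ?case using v' by blast
qed

lemma DD_pos_braid_eq: "braid_eq u w \<Longrightarrow> DD_pos w \<Longrightarrow> DD_pos u"
  unfolding DD_pos_def by (meson braid_eq_trans)

lemma one_positive_DD_pos: "one_positive w \<Longrightarrow> DD_pos w"
  unfolding DD_pos_def using braid_eq_refl by blast

lemma DD_pos_Delta_squared_append:
  assumes "\<sigma>\<^sub>1' \<notin> set X\<^sub>0" "\<sigma>\<^sub>2' \<notin> set X\<^sub>1" "\<sigma>\<^sub>1' \<notin> set X\<^sub>2"
  shows "DD_pos (Delta @ Delta @ X\<^sub>0 @ X\<^sub>1 @ X\<^sub>2)"
proof (rule DD_pos_braid_eq)
  have "braid_eq (Delta @ Delta @ X\<^sub>0 @ X\<^sub>1 @ X\<^sub>2) (X\<^sub>0 @ Delta @ Delta @ X\<^sub>1 @ X\<^sub>2)"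
    using braid_eq_context[OF braid_eq_Delta_squared_central[of X\<^sub>0], of "[]" "X\<^sub>1 @ X\<^sub>2"] by simp
  also have "braid_eq \<dots> (X\<^sub>0 @ Delta @ flip_word X\<^sub>1 @ Delta @ X\<^sub>2)"
    using braid_eq_context[OF braid_eq_sym[OF braid_eq_word_Delta[of "flip_word X\<^sub>1"]], of "X\<^sub>0 @ Delta" X\<^sub>2]
    by simp
  finally show "braid_eq (Delta @ Delta @ X\<^sub>0 @ X\<^sub>1 @ X\<^sub>2) (X\<^sub>0 @ Delta @ flip_word X\<^sub>1 @ Delta @ X\<^sub>2)" .
  have "\<sigma>\<^sub>1' \<notin> set (flip_word X\<^sub>1)"
    using assms(2) by (auto simp: flip_word_def) (metis flip_gen.simps(2) flip_gen_flip_gen)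
  then show "DD_pos (X\<^sub>0 @ Delta @ flip_word X\<^sub>1 @ Delta @ X\<^sub>2)"
    using assms by (intro one_positive_DD_pos) (auto simp: one_positive_def Delta_def)
qed

lemma set_flip_word_subset:
  "set w \<subseteq> {(g, True), (g, False)} \<Longrightarrow> set (flip_word w) \<subseteq> {(flip_gen g, True), (flip_gen g, False)}"
  by (auto simp: flip_word_def)

lemma DD_pos_Delta_squared_conj_generator_power:
  assumes "set P \<subseteq> {(g, True), (g, False)}"
  shows "DD_pos (Delta @ Delta @ inv_word \<beta> @ P @ \<beta>)"
proof -
  obtain v Q where v: "pos_neg_word v \<or> neg_pos_word v" and Q: "Q = P \<or> Q = flip_word P"
    and conj: "braid_eq (inv_word \<beta> @ P @ \<beta>) (inv_word v @ Q @ v)"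
    using conjugate_normal_form by blast
  obtain h where h: "set Q \<subseteq> {(h, True), (h, False)}"
    using Q assms set_flip_word_subset[OF assms] by blast
  have "DD_pos (Delta @ Delta @ inv_word v @ Q @ v)"
    using v
  proof
    assume "pos_neg_word v"
    then have v_letters: "\<sigma>\<^sub>1' \<notin> set v" "\<sigma>\<^sub>2' \<notin> set (inv_word v)"
      by (auto simp: pos_neg_word_def mem_set_inv_word)
    show ?thesis
    proof (cases h)
      case S1
      then show ?thesis
        using DD_pos_Delta_squared_append[of "[]" "inv_word v @ Q" v] v_letters h by auto
    next
      case S2
      then show ?thesis
        using DD_pos_Delta_squared_append[of "[]" "inv_word v" "Q @ v"] v_letters h by auto
    qed
  next
    assume "neg_pos_word v"
    then have v_letters: "\<sigma>\<^sub>2' \<notin> set v" "\<sigma>\<^sub>1' \<notin> set (inv_word v)"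
      by (auto simp: neg_pos_word_def mem_set_inv_word)
    show ?thesis
    proof (cases h)
      case S1
      then show ?thesis
        using DD_pos_Delta_squared_append[of "inv_word v" "Q @ v" "[]"] v_letters h by auto
    next
      case S2
      then show ?thesis
        using DD_pos_Delta_squared_append[of "inv_word v @ Q" v "[]"] v_letters h by auto
    qed
  qed
  then show ?thesis
    using DD_pos_braid_eq braid_eq_context[OF conj, of "Delta @ Delta" "[]"] by simp
qed

lemma set_sigma2_pow: "set (sigma2_pow k) \<subseteq> {(S2, True), (S2, False)}"
  by (auto simp: sigma2_pow_def)

lemma inv_word_sigma2_pow: "inv_word (sigma2_pow k) = sigma2_pow (- k)"
  by (auto simp: sigma2_pow_def inv_word_def)

theorem lemma28:
  fixes \<beta> :: bword and k :: int
  shows "DD_less (inv_word (Delta @ Delta)) (inv_word \<beta> @ sigma2_pow k @ \<beta>) \<and>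
         DD_less (inv_word \<beta> @ sigma2_pow k @ \<beta>) (Delta @ Delta)"
proof
  show "DD_less (inv_word (Delta @ Delta)) (inv_word \<beta> @ sigma2_pow k @ \<beta>)"
    using DD_pos_Delta_squared_conj_generator_power[OF set_sigma2_pow] by (simp add: DD_less_def)
  have "braid_eq (inv_word (inv_word \<beta> @ sigma2_pow k @ \<beta>) @ Delta @ Delta)
                 (Delta @ Delta @ inv_word \<beta> @ sigma2_pow (- k) @ \<beta>)"
    using braid_eq_sym[OF braid_eq_Delta_squared_central[of "inv_word \<beta> @ sigma2_pow (- k) @ \<beta>"]]
    by (simp add: inv_word_sigma2_pow)
  then show "DD_less (inv_word \<beta> @ sigma2_pow k @ \<beta>) (Delta @ Delta)"
    unfolding DD_less_def
    using DD_pos_braid_eq DD_pos_Delta_squared_conj_generator_power[OF set_sigma2_pow] by blast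
qed

end
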